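(* Let $n \geq 2$ and $r$ be positive integers. Let $P(X)$ be a complex polynomial of degree $n$ and $U(X)$ a quadratic polynomial with non-zero discriminant such that \[ U(X)P''(X) - (n-1)U'(X)P'(X) + \frac{n(n-1)}{2}U''(X)P(X) = 0. \] Set $Y_{1}(X) = 2U(X)P'(X) - nU'(X)P(X)$, $h = \frac{n^{2}-1}{4}\left(U'(X)^{2} - 2U(X)U''(X)\right)$ (a constant) and $\lambda = h/(n^{2}-1)$. Define polynomials $A_{r}(X), B_{r}(X)$ by \[ A_{0} = \tfrac{2h}{3},\quad A_{1} = \tfrac{2(n+1)}{3}\left(UP' - \tfrac{n-1}{2}U'P\right),\quad B_{0} = \tfrac{2hX}{3},\quad B_{1} = XA_{1} - \tfrac{2(n+1)UP}{3}, \] and for $r \geq 1$ \[ \lambda(n(r+1)-1)A_{r+1} = \left(r+\tfrac12\right)Y_{1}A_{r} - (nr+1)P^{2}A_{r-1}, \] \[ \lambda(n(r+1)-1)B_{r+1} = \left(r+\tfrac12\right)Y_{1}B_{r} - (nr+1)P^{2}B_{r-1}. \] Let $\beta$ be a root of $P(X)$ and $C_{r}(X) = \beta A_{r}(X) - B_{r}(X)$. Fix a square root $\sqrt{\lambda}$ and put \[ z(X) = \tfrac12\left(\tfrac{Y_{1}(X)}{2n\sqrt{\lambda}} + P(X)\right),\quad u(X) = \tfrac12\left(\tfrac{Y_{1}(X)}{2n\sqrt{\lambda}} - P(X)\right),\quad w(X) = \tfrac{z(X)}{u(X)}, \] \[ a(X) = \tfrac{(n-1)\sqrt{\lambda}}{2P(X)}A_{1}(X)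 - \left(\tfrac{Y_{1}(X)}{4\sqrt{\lambda}P(X)} - \tfrac12\right)A_{0}(X),\quad b(X) = \tfrac{(n-1)\sqrt{\lambda}}{2P(X)}A_{1}(X) - \left(\tfrac{Y_{1}(X)}{4\sqrt{\lambda}P(X)} + \tfrac12\right)A_{0}(X), \] \[ c(X) = \tfrac{(n-1)\sqrt{\lambda}}{2P(X)}B_{1}(X) - \left(\tfrac{Y_{1}(X)}{4\sqrt{\lambda}P(X)} - \tfrac12\right)B_{0}(X),\quad d(X) = \tfrac{(n-1)\sqrt{\lambda}}{2P(X)}B_{1}(X) - \left(\tfrac{Y_{1}(X)}{4\sqrt{\lambda}P(X)} + \tfrac12\right)B_{0}(X). \] Let \[ R_{n,r}(x) = \frac{\Gamma(r+1+1/n)}{r!\,\Gamma(1/n)} \int_{1}^{x} (1-t)^{r}(t-x)^{r} t^{-(r+1-1/n)}\, dt, \] the integration path being the straight line from $1$ to $x$. If $x$ is a non-zero complex number such that $w(x)$ is not a negative number or zero, then \[ (\sqrt{\lambda})^{r}C_{r}(x) = \left(\beta\left(a(x)w(x)^{1/n} - b(x)\right) - \left(c(x)w(x)^{1/n} - d(x)\right)\right)X_{n,r}^{*}(u(x),z(x)) - \left(\beta a(x) - c(x)\right)u(x)^{r}R_{n,r}(w(x)). \]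
   Context: For positive integers $n \geq 2$ and $r$, $X_{n,r}(X) = {}_{2}F_{1}(-r,-r-1/n;1-1/n;X)$, where ${}_{2}F_{1}(a,b;c;X) = \sum_{s\geq0}\frac{(a)_{s}(b)_{s}}{(c)_{s}\,s!}X^{s}$ with $(y)_{s} = y(y+1)\cdots(y+s-1)$ (a polynomial of degree at most $r$ here), and $X_{n,r}^{*}(X,Y) = Y^{r}X_{n,r}(X/Y)$ is the associated homogeneous form. Non-integral complex powers ($w^{1/n}$, $t^{1/n-r-1}$) are taken with the principal branch. *)

theory Defs
  imports "HOL-Complex_Analysis.Complex_Analysis" "HOL-Computational_Algebra.Polynomial"
begin

definition quad_disc :: "complex poly \<Rightarrow> complex" where
  "quad_disc U = (coeff U 1)^2 - 4 * coeff U 2 * coeff U 0"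

definition Y1_poly :: "nat \<Rightarrow> complex poly \<Rightarrow> complex poly \<Rightarrow> complex poly" where
  "Y1_poly n U P = smult 2 (U * pderiv P) - smult (of_nat n) (pderiv U * P)"

definition h_poly :: "nat \<Rightarrow> complex poly \<Rightarrow> complex poly" where
  "h_poly n U = smult ((of_nat n ^ 2 - 1) / 4) ((pderiv U)^2 - smult 2 (U * pderiv (pderiv U)))"

definition lam :: "nat \<Rightarrow> complex poly \<Rightarrow> complex" where
  "lam n U = coeff (h_poly n U) 0 / (of_nat n ^ 2 - 1)"

definition A0_poly :: "nat \<Rightarrow> complex poly \<Rightarrow> complex poly" where
  "A0_poly n U = smult (2/3) (h_poly n U)"

definition A1_poly :: "nat \<Rightarrow> complex poly \<Rightarrow> complex poly \<Rightarrow> complex poly" where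
  "A1_poly n U P = smult (2 * (of_nat n + 1) / 3)
      (U * pderiv P - smult ((of_nat n - 1) / 2) (pderiv U * P))"

definition B0_poly :: "nat \<Rightarrow> complex poly \<Rightarrow> complex poly" where
  "B0_poly n U = smult (2/3) (h_poly n U * [:0, 1:])"

definition B1_poly :: "nat \<Rightarrow> complex poly \<Rightarrow> complex poly \<Rightarrow> complex poly" where
  "B1_poly n U P = [:0, 1:] * A1_poly n U P - smult (2 * (of_nat n + 1) / 3) (U * P)"

text \<open>The three-term recurrence
  lam (n(r+1)-1) F_{r+1} = (r+1/2) Y1 F_r - (nr+1) P^2 F_{r-1}   (r >= 1),
  solved for F_{r+1} (written with r+1 in place of r).\<close>
fun rec_seq :: "complex \<Rightarrow> nat \<Rightarrow> complex poly \<Rightarrow> complex poly \<Rightarrow> complex poly \<Rightarrow> complex poly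
                 \<Rightarrow> nat \<Rightarrow> complex poly" where
  "rec_seq l n Y P F0 F1 0 = F0"
| "rec_seq l n Y P F0 F1 (Suc 0) = F1"
| "rec_seq l n Y P F0 F1 (Suc (Suc r)) =
     smult (1 / (l * (of_nat n * (of_nat (Suc r) + 1) - 1)))
       (smult (of_nat (Suc r) + 1/2) (Y * rec_seq l n Y P F0 F1 (Suc r))
        - smult (of_nat n * of_nat (Suc r) + 1) (P^2 * rec_seq l n Y P F0 F1 r))"

definition A_seq :: "nat \<Rightarrow> complex poly \<Rightarrow> complex poly \<Rightarrow> nat \<Rightarrow> complex poly" where
  "A_seq n U P = rec_seq (lam n U) n (Y1_poly n U P) P (A0_poly n U) (A1_poly n U P)"

definition B_seq :: "nat \<Rightarrow> complex poly \<Rightarrow> complex poly \<Rightarrow> nat \<Rightarrow> complex poly" where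
  "B_seq n U P = rec_seq (lam n U) n (Y1_poly n U P) P (B0_poly n U) (B1_poly n U P)"

text \<open>The polynomial
  (n-1) s/(2P) F1 - (Y1/(4 s P) - e) F0  =  ((n-1)s/2 F1 - Y1 F0/(4s)) / P + e F0,
  the division by P being exact (polynomial quotient).  With e = 1/2 this is a (resp. c),
  with e = -1/2 it is b (resp. d).\<close>
definition coef_poly :: "nat \<Rightarrow> complex \<Rightarrow> complex poly \<Rightarrow> complex poly \<Rightarrow> complex poly
                          \<Rightarrow> complex poly \<Rightarrow> complex \<Rightarrow> complex poly" where
  "coef_poly n s P Y F1 F0 e =
     (smult ((of_nat n - 1) * s / 2) F1 - smult (1 / (4 * s)) (Y * F0)) div P + smult e F0"

text \<open>X_{n,r}(X) = 2F1(-r, -r-1/n; 1-1/n; X) (terms with index > r vanish).\<close>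
definition Xnr_coeff :: "nat \<Rightarrow> nat \<Rightarrow> nat \<Rightarrow> complex" where
  "Xnr_coeff n r k = pochhammer (- of_nat r) k * pochhammer (- of_nat r - 1 / of_nat n) k
                      / (pochhammer (1 - 1 / of_nat n) k * fact k)"

definition Xnr :: "nat \<Rightarrow> nat \<Rightarrow> complex \<Rightarrow> complex" where
  "Xnr n r X = (\<Sum>k\<le>r. Xnr_coeff n r k * X ^ k)"

text \<open>Homogeneous form X*_{n,r}(X,Y) = Y^r X_{n,r}(X/Y), written out as a polynomial.\<close>
definition Xnr_star :: "nat \<Rightarrow> nat \<Rightarrow> complex \<Rightarrow> complex \<Rightarrow> complex" where
  "Xnr_star n r X Y = (\<Sum>k\<le>r. Xnr_coeff n r k * X ^ k * Y ^ (r - k))"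

definition Rnr :: "nat \<Rightarrow> nat \<Rightarrow> complex \<Rightarrow> complex" where
  "Rnr n r x = Gamma (of_nat r + 1 + 1 / of_nat n) / (fact r * Gamma (1 / of_nat n))
     * contour_integral (linepath 1 x)
         (\<lambda>t. (1 - t) ^ r * (t - x) ^ r * t powr (- (of_nat r + 1 - 1 / of_nat n)))"

definition z_val :: "nat \<Rightarrow> complex poly \<Rightarrow> complex poly \<Rightarrow> complex \<Rightarrow> complex \<Rightarrow> complex" where
  "z_val n U P s x = (poly (Y1_poly n U P) x / (2 * of_nat n * s) + poly P x) / 2"

definition u_val :: "nat \<Rightarrow> complex poly \<Rightarrow> complex poly \<Rightarrow> complex \<Rightarrow> complex \<Rightarrow> complex" where
  "u_val n U P s x = (poly (Y1_poly n U P) x / (2 * of_nat n * s) - poly P x) / 2"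

end

theory Submission
  imports Defs
begin

text \<open>Both sides of the identity, as sequences in r, satisfy the contiguous recurrence
  (r + 2 - \<alpha>) f(r+2) = (2r + 3)(z + u) f(r+1) - (r + 1 + \<alpha>)(z - u)^2 f(r),  \<alpha> = 1/n,
and agree at r = 0, 1. On the left this is the defining recurrence of A_r, B_r rescaled by
(\<surd>\<lambda>)^r, since z + u = Y_1/(2n\<surd>\<lambda>) and z - u = P. On the right, r \<mapsto> X*_{n,r}(a, b) satisfies
it by the contiguous relations of the terminating hypergeometric coefficients, and
R_{n,r}(w) = w^{1/n} X*_{n,r}(1, w) - X*_{n,r}(w, 1) follows from the same recurrence for the
integrals (integration by parts) and the explicit cases r = 0, 1. In fact
(\<surd>\<lambda>)^r A_r(x) = a X*(z, u) - b X*(u, z) and likewise for B_r with c, d, for any initial pair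
for which the division by P defining these coefficients is exact.\<close>

section \<open>Terminating hypergeometric polynomials\<close>

definition hyp_coeff :: "complex \<Rightarrow> nat \<Rightarrow> nat \<Rightarrow> complex" where
  "hyp_coeff a r k =
     pochhammer (- of_nat r) k * pochhammer (- of_nat r - a) k / (pochhammer (1 - a) k * fact k)"

lemma Xnr_coeff_eq_hyp_coeff: "Xnr_coeff n r k = hyp_coeff (1 / of_nat n) r k"
  by (simp add: Xnr_coeff_def hyp_coeff_def)

lemma hyp_coeff_eq_0: "r < k \<Longrightarrow> hyp_coeff a r k = 0"
  by (simp add: hyp_coeff_def pochhammer_of_nat_eq_0_iff)

lemma hyp_coeff_0 [simp]: "hyp_coeff a r 0 = 1"
  by (simp add: hyp_coeff_def)

lemma hyp_coeff_1: "hyp_coeff a r 1 = of_nat r * (of_nat r + a) / (1 - a)"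
  by (simp add: hyp_coeff_def algebra_simps)

lemma hyp_coeff_Suc:
  "hyp_coeff a r (Suc k) = (of_nat k - of_nat r) * (of_nat k - of_nat r - a)
     / ((1 - a + of_nat k) * of_nat (Suc k)) * hyp_coeff a r k"
  unfolding hyp_coeff_def pochhammer_rec' fact_Suc by (simp add: ac_simps)

lemma hyp_coeff_Suc_Suc:
  "hyp_coeff a (Suc r) (Suc k) = of_nat (Suc r) * (of_nat (Suc r) + a)
     / ((1 - a + of_nat k) * of_nat (Suc k)) * hyp_coeff a r k"
proof -
  have e: "- of_nat (Suc r) + 1 = (- of_nat r :: complex)" "- of_nat (Suc r) - a + 1 = - of_nat r - a"
    by simp_all
  have "pochhammer (- of_nat (Suc r)) (Suc k) * pochhammer (- of_nat (Suc r) - a) (Suc k)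
      = of_nat (Suc r) * (of_nat (Suc r) + a) * (pochhammer (- of_nat r) k * pochhammer (- of_nat r - a) k)"
    unfolding pochhammer_rec e by (simp add: algebra_simps)
  then show ?thesis
    unfolding hyp_coeff_def pochhammer_rec'[of "1 - a"] fact_Suc by (simp add: ac_simps)
qed

lemma hyp_coeff_recurrence:
  assumes "1 - a \<notin> \<int>\<^sub>\<le>\<^sub>0"
  shows "(of_nat m + 2 - a) * hyp_coeff a (Suc (Suc m)) (Suc (Suc j))
   = (2 * of_nat m + 3) * (hyp_coeff a (Suc m) (Suc (Suc j)) + hyp_coeff a (Suc m) (Suc j))
     - (of_nat m + 1 + a) * (hyp_coeff a m (Suc (Suc j)) - 2 * hyp_coeff a m (Suc j) + hyp_coeff a m j)"
proof -
  define i1 i2 where "i1 = inverse ((1 - a + of_nat j) * of_nat (Suc j))"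
    and "i2 = inverse ((1 - a + of_nat (Suc j)) * of_nat (Suc (Suc j)))"
  have "1 - a + of_nat i \<noteq> 0" for i
  proof
    assume "1 - a + of_nat i = 0"
    then have "1 - a = - of_nat i"
      by (simp add: eq_neg_iff_add_eq_0)
    with assms show False
      by (simp add: minus_of_nat_in_nonpos_Ints)
  qed
  then have nz: "(1 - a + of_nat j) * of_nat (Suc j) \<noteq> 0"
    "(1 - a + of_nat (Suc j)) * of_nat (Suc (Suc j)) \<noteq> 0"
    by (simp_all del: of_nat_Suc)
  have inv: "i1 * ((1 - a + of_nat j) * of_nat (Suc j)) = 1"
    "i2 * ((1 - a + of_nat (Suc j)) * of_nat (Suc (Suc j))) = 1"
    using left_inverse[OF nz(1)] left_inverse[OF nz(2)] by (simp_all only: i1_def i2_def)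
  have c1: "hyp_coeff a m (Suc j) = (of_nat j - of_nat m) * (of_nat j - of_nat m - a) * i1 * hyp_coeff a m j"
    and c2: "hyp_coeff a m (Suc (Suc j)) = (of_nat (Suc j) - of_nat m) * (of_nat (Suc j) - of_nat m - a) * i2
      * hyp_coeff a m (Suc j)"
    by (simp_all only: hyp_coeff_Suc divide_inverse i1_def i2_def)
  have c3: "hyp_coeff a (Suc m) (Suc j) = of_nat (Suc m) * (of_nat (Suc m) + a) * i1 * hyp_coeff a m j"
    and c4: "hyp_coeff a (Suc m) (Suc (Suc j)) = of_nat (Suc m) * (of_nat (Suc m) + a) * i2
      * hyp_coeff a m (Suc j)"
    and c5: "hyp_coeff a (Suc (Suc m)) (Suc (Suc j)) = of_nat (Suc (Suc m)) * (of_nat (Suc (Suc m)) + a) * i2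
      * hyp_coeff a (Suc m) (Suc j)"
    by (simp_all only: hyp_coeff_Suc_Suc divide_inverse i1_def i2_def)
  show ?thesis
    unfolding c5 c4 c3 c2 c1 of_nat_Suc using inv[unfolded of_nat_Suc] by algebra
qed

lemma hyp_coeff_recurrence_1:
  assumes "a \<noteq> 1"
  shows "(of_nat m + 2 - a) * hyp_coeff a (Suc (Suc m)) 1
   = (2 * of_nat m + 3) * (hyp_coeff a (Suc m) 1 + hyp_coeff a (Suc m) 0)
     - (of_nat m + 1 + a) * (hyp_coeff a m 1 - 2 * hyp_coeff a m 0)"
proof -
  have "1 - a \<noteq> 0"
    using assms by simp
  define q where "q = 1 / (1 - a)"
  have q: "q * (1 - a) = 1"
    using \<open>1 - a \<noteq> 0\<close> by (simp add: q_def)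
  have divide_q: "N / (1 - a) = N * q" for N
    by (simp add: q_def)
  show ?thesis
    unfolding hyp_coeff_1 hyp_coeff_0 of_nat_Suc divide_q using q by algebra
qed

definition hyp_poly :: "complex \<Rightarrow> nat \<Rightarrow> complex poly" where
  "hyp_poly a r = (\<Sum>k\<le>r. monom (hyp_coeff a r k) k)"

lemma coeff_hyp_poly: "coeff (hyp_poly a r) k = hyp_coeff a r k"
  unfolding hyp_poly_def by (auto simp: coeff_sum coeff_monom hyp_coeff_eq_0)

lemma Xnr_star_eq_poly_hyp_poly: "Xnr_star n r t 1 = poly (hyp_poly (1 / of_nat n) r) t"
  by (simp add: Xnr_star_def hyp_poly_def poly_sum poly_monom Xnr_coeff_eq_hyp_coeff)

text \<open>Since pCons 0 p = t p, this is
  (m + 2 - a) X_{m+2}(t) = (2m + 3)(1 + t) X_{m+1}(t) - (m + 1 + a)(1 - t)^2 X_m(t).\<close>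
lemma hyp_poly_recurrence:
  assumes "1 - a \<notin> \<int>\<^sub>\<le>\<^sub>0"
  shows "smult (of_nat m + 2 - a) (hyp_poly a (Suc (Suc m)))
   = smult (2 * of_nat m + 3) (hyp_poly a (Suc m) + pCons 0 (hyp_poly a (Suc m)))
     - smult (of_nat m + 1 + a)
         (hyp_poly a m - smult 2 (pCons 0 (hyp_poly a m)) + pCons 0 (pCons 0 (hyp_poly a m)))"
proof (rule poly_eqI)
  have "a \<noteq> 1"
    using assms by auto
  fix k
  consider "k = 0" | "k = 1" | j where "k = Suc (Suc j)"
    by (metis One_nat_def not0_implies_Suc)
  then show "coeff (smult (of_nat m + 2 - a) (hyp_poly a (Suc (Suc m)))) k =
    coeff (smult (2 * of_nat m + 3) (hyp_poly a (Suc m) + pCons 0 (hyp_poly a (Suc m)))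
     - smult (of_nat m + 1 + a)
         (hyp_poly a m - smult 2 (pCons 0 (hyp_poly a m)) + pCons 0 (pCons 0 (hyp_poly a m)))) k"
  proof cases
    case 1
    then show ?thesis
      by (simp add: coeff_hyp_poly algebra_simps)
  next
    case 2
    then show ?thesis
      using hyp_coeff_recurrence_1[OF \<open>a \<noteq> 1\<close>, of m] by (simp add: coeff_hyp_poly)
  next
    case 3
    then show ?thesis
      using hyp_coeff_recurrence[OF assms, of m j] by (simp add: coeff_hyp_poly)
  qed
qed

definition contiguous_recurrence :: "complex \<Rightarrow> complex \<Rightarrow> complex \<Rightarrow> (nat \<Rightarrow> complex) \<Rightarrow> bool" where
  "contiguous_recurrence a p q f \<longleftrightarrow> (\<forall>m. (of_nat m + 2 - a) * f (Suc (Suc m))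
     = (2 * of_nat m + 3) * p * f (Suc m) - (of_nat m + 1 + a) * q * f m)"

lemma contiguous_recurrence_diff:
  assumes "contiguous_recurrence a p q f" "contiguous_recurrence a p q g"
  shows "contiguous_recurrence a p q (\<lambda>r. c * f r - d * g r)"
proof (unfold contiguous_recurrence_def, intro allI)
  fix m
  have "(of_nat m + 2 - a) * f (Suc (Suc m)) = (2 * of_nat m + 3) * p * f (Suc m) - (of_nat m + 1 + a) * q * f m"
    "(of_nat m + 2 - a) * g (Suc (Suc m)) = (2 * of_nat m + 3) * p * g (Suc m) - (of_nat m + 1 + a) * q * g m"
    using assms unfolding contiguous_recurrence_def by blast+
  then show "(of_nat m + 2 - a) * (c * f (Suc (Suc m)) - d * g (Suc (Suc m)))
    = (2 * of_nat m + 3) * p * (c * f (Suc m) - d * g (Suc m)) - (of_nat m + 1 + a) * q * (c * f m - d * g m)"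
    by algebra
qed

lemma contiguous_recurrence_unique:
  assumes "contiguous_recurrence a p q f" "contiguous_recurrence a p q g"
    and "\<And>m. a \<noteq> of_nat m + 2" and "f 0 = g 0" "f 1 = g 1"
  shows "f r = g r"
proof -
  have "f m = g m \<and> f (Suc m) = g (Suc m)" for m
  proof (induction m)
    case 0
    then show ?case
      using assms(4,5) by simp
  next
    case (Suc m)
    have "(of_nat m + 2 - a) * f (Suc (Suc m)) = (of_nat m + 2 - a) * g (Suc (Suc m))"
      using assms(1,2) Suc.IH unfolding contiguous_recurrence_def by simp
    moreover have "of_nat m + 2 - a \<noteq> 0"
      using assms(3)[of m] by simp
    ultimately show ?case
      using Suc.IH by simp
  qed
  then show ?thesis
    by blast
qed

lemma inverse_of_nat_neq_of_nat_add_2: "1 / of_nat n \<noteq> (of_nat m + 2 :: complex)"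
proof -
  have "1 / real n \<le> 1"
    by (cases n) simp_all
  then have "1 / real n < real m + 2"
    by linarith
  then show ?thesis
    by (auto simp: complex_eq_iff)
qed

lemma Xnr_star_mult: "Xnr_star n r (c * a) (c * b) = c ^ r * Xnr_star n r a b"
  unfolding Xnr_star_def sum_distrib_left
proof (rule sum.cong[OF refl])
  fix k
  assume "k \<in> {..r}"
  then have "c ^ r = c ^ k * c ^ (r - k)"
    by (simp flip: power_add)
  then show "Xnr_coeff n r k * (c * a) ^ k * (c * b) ^ (r - k) = c ^ r * (Xnr_coeff n r k * a ^ k * b ^ (r - k))"
    by (simp add: power_mult_distrib)
qed

lemma contiguous_recurrence_Xnr_star:
  assumes "n \<noteq> 1" "b \<noteq> 0"
  shows "contiguous_recurrence (1 / of_nat n) (a + b) ((a - b)^2) (\<lambda>r. Xnr_star n r a b)"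
proof -
  define \<alpha> :: complex where "\<alpha> = 1 / of_nat n"
  define t where "t = a / b"
  define S where "S r = poly (hyp_poly \<alpha> r) t" for r
  have Xt: "Xnr_star n r a b = b ^ r * S r" for r
    using Xnr_star_mult[of n r b t 1] assms(2) by (simp add: t_def S_def \<alpha>_def Xnr_star_eq_poly_hyp_poly)
  have "Re (1 - \<alpha>) > 0"
  proof (cases "n = 0")
    case False
    then have "n \<ge> 2"
      using assms(1) by linarith
    then show ?thesis
      by (simp add: \<alpha>_def)
  qed (simp add: \<alpha>_def)
  then have "1 - \<alpha> \<notin> \<int>\<^sub>\<le>\<^sub>0"
    using nonpos_Ints_subset_nonpos_Reals by (auto simp: complex_nonpos_Reals_iff)
  from arg_cong[OF hyp_poly_recurrence[OF this], of "\<lambda>p. poly p t"]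
  have S: "(of_nat m + 2 - \<alpha>) * S (Suc (Suc m))
     = (2 * of_nat m + 3) * (1 + t) * S (Suc m) - (of_nat m + 1 + \<alpha>) * (1 - t)^2 * S m" for m
    by (simp add: S_def algebra_simps power2_eq_square)
  have "a = t * b"
    using assms(2) by (simp add: t_def)
  then have "(of_nat m + 2 - \<alpha>) * (b * (b * B) * S (Suc (Suc m)))
     = (2 * of_nat m + 3) * (a + b) * (b * B * S (Suc m))
       - (of_nat m + 1 + \<alpha>) * (a - b)^2 * (B * S m)" for m B
    using S[of m] by algebra
  then have "(of_nat m + 2 - \<alpha>) * (b ^ Suc (Suc m) * S (Suc (Suc m)))
     = (2 * of_nat m + 3) * (a + b) * (b ^ Suc m * S (Suc m))
       - (of_nat m + 1 + \<alpha>) * (a - b)^2 * (b ^ m * S m)" for m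
    unfolding power_Suc .
  then show ?thesis
    unfolding contiguous_recurrence_def Xt \<alpha>_def by blast
qed

section \<open>The integrals R_{n,r}\<close>

lemma closed_segment_1_avoids_nonpos_Reals:
  fixes w t :: complex
  assumes "w \<notin> \<real>\<^sub>\<le>\<^sub>0" "t \<in> closed_segment 1 w"
  shows "t \<notin> \<real>\<^sub>\<le>\<^sub>0"
proof -
  have slot: "\<real>\<^sub>\<le>\<^sub>0 = complex_of_real ` {..0}"
    by (auto simp: nonpos_Reals_def)
  show ?thesis
    using starlike_slotted_complex_plane_left_aux[of w 0 1] assms unfolding slot by auto
qed

lemma has_contour_integral_linepath_primitive:
  assumes "w \<notin> \<real>\<^sub>\<le>\<^sub>0"
    and "\<And>t. t \<notin> \<real>\<^sub>\<le>\<^sub>0 \<Longrightarrow> (G has_field_derivative g t) (at t)"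
  shows "(g has_contour_integral (G w - G 1)) (linepath 1 w)"
proof -
  have "(g has_contour_integral (G (pathfinish (linepath 1 w)) - G (pathstart (linepath 1 w)))) (linepath 1 w)"
  proof (rule contour_integral_primitive[where S = "closed_segment 1 w"])
    show "(G has_field_derivative g t) (at t within closed_segment 1 w)" if "t \<in> closed_segment 1 w" for t
      using assms closed_segment_1_avoids_nonpos_Reals that by (blast intro: has_field_derivative_at_within)
  qed auto
  then show ?thesis
    by simp
qed

definition Rnr_integral :: "complex \<Rightarrow> complex \<Rightarrow> nat \<Rightarrow> complex" where
  "Rnr_integral a w k = contour_integral (linepath 1 w)
     (\<lambda>t. (1 - t) ^ k * (t - w) ^ k * t powr (- (of_nat k + 1 - a)))"

lemma Rnr_integrand_recurrence_primitive:
  fixes a w t :: complex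
  assumes t: "t \<notin> \<real>\<^sub>\<le>\<^sub>0"
  defines "f \<equiv> \<lambda>k. (1 - t) ^ k * (t - w) ^ k * t powr (- (of_nat k + 1 - a))"
  shows "((\<lambda>t. (1 - t) ^ Suc m * (t - w) ^ Suc m * (t powr (a - of_nat m - 2)
      * (w * (of_nat m + 2 + a) - a * (w + 1) * t - (of_nat m + 2 - a) * t^2))) has_field_derivative
      (of_nat m + 2 - a) * (of_nat m + 2 + a) * f (Suc (Suc m))
      - (2 * of_nat m + 3) * (of_nat m + 2) * (w + 1) * f (Suc m)
      + (of_nat m + 1) * (of_nat m + 2) * (w - 1)^2 * f m) (at t)"
proof -
  define e where "e = a - of_nat m - 2"
  define q where "q t = w * (of_nat m + 2 + a) - a * (w + 1) * t - (of_nat m + 2 - a) * t^2" for t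
  have d1: "((\<lambda>t. 1 - t) has_field_derivative - 1) (at t)"
    and d2: "((\<lambda>t. t - w) has_field_derivative 1) (at t)"
    by (auto intro!: derivative_eq_intros)
  have dq: "(q has_field_derivative (- a * (w + 1) - (of_nat m + 2 - a) * (2 * t))) (at t)"
    unfolding q_def[abs_def] by (rule derivative_eq_intros refl | simp)+
  have "t \<noteq> 0"
    using t by auto
  define T where "T = t powr (a - of_nat m - 3)"
  have "t powr (x + of_nat j) = t powr x * t ^ j" for x j
    using \<open>t \<noteq> 0\<close> by (simp add: powr_add powr_nat')
  from this[of "a - of_nat m - 3" 1] this[of "a - of_nat m - 3" 2]
  have p: "t powr e = T * t" "t powr (e - 1) = T" "t powr (- (of_nat (Suc (Suc m)) + 1 - a)) = T"
    "t powr (- (of_nat (Suc m) + 1 - a)) = T * t" "t powr (- (of_nat m + 1 - a)) = T * t^2"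
    by (simp_all add: T_def e_def algebra_simps)
  define g' where "g' = (of_nat (Suc m) * (- 1 * (1 - t) ^ (Suc m - Suc 0)) * (t - w) ^ Suc m
       + of_nat (Suc m) * (1 * (t - w) ^ (Suc m - Suc 0)) * (1 - t) ^ Suc m) * (t powr e * q t)
      + (e * t powr (e - 1) * q t + (- a * (w + 1) - (of_nat m + 2 - a) * (2 * t)) * t powr e)
        * ((1 - t) ^ Suc m * (t - w) ^ Suc m)"
  have "((\<lambda>t. (1 - t) ^ Suc m * (t - w) ^ Suc m * (t powr e * q t)) has_field_derivative g') (at t)"
    unfolding g'_def
    by (rule DERIV_mult[OF DERIV_mult[OF DERIV_power[OF d1] DERIV_power[OF d2]]
          DERIV_mult[OF has_field_derivative_powr[OF t] dq]])
  moreover have "g' = (of_nat m + 2 - a) * (of_nat m + 2 + a) * f (Suc (Suc m))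
      - (2 * of_nat m + 3) * (of_nat m + 2) * (w + 1) * f (Suc m)
      + (of_nat m + 1) * (of_nat m + 2) * (w - 1)^2 * f m"
    unfolding g'_def f_def q_def p
    unfolding power_Suc of_nat_Suc e_def diff_Suc_Suc minus_nat.diff_0
    by algebra
  ultimately show ?thesis
    unfolding e_def q_def by simp
qed

lemma Rnr_integral_recurrence:
  assumes w: "w \<notin> \<real>\<^sub>\<le>\<^sub>0"
  shows "(of_nat m + 2 - a) * (of_nat m + 2 + a) * Rnr_integral a w (Suc (Suc m))
     = (2 * of_nat m + 3) * (of_nat m + 2) * (w + 1) * Rnr_integral a w (Suc m)
       - (of_nat m + 1) * (of_nat m + 2) * (w - 1)^2 * Rnr_integral a w m"
proof -
  define f where "f k t = (1 - t) ^ k * (t - w) ^ k * t powr (- (of_nat k + 1 - a))" for k t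
  define g where "g t = (1 - t) ^ Suc m * (t - w) ^ Suc m * (t powr (a - of_nat m - 2)
      * (w * (of_nat m + 2 + a) - a * (w + 1) * t - (of_nat m + 2 - a) * t^2))" for t
  define c2 c1 c0 where "c2 = (of_nat m + 2 - a) * (of_nat m + 2 + a)"
    and "c1 = (2 * of_nat m + 3) * (of_nat m + 2) * (w + 1)"
    and "c0 = (of_nat m + 1) * (of_nat m + 2) * (w - 1)^2"
  have "f k contour_integrable_on linepath 1 w" for k
    unfolding f_def
    by (intro contour_integrable_continuous_linepath continuous_at_imp_continuous_on ballI continuous_intros)
       (use closed_segment_1_avoids_nonpos_Reals[OF w] in auto)
  then have "(f k has_contour_integral Rnr_integral a w k) (linepath 1 w)" for k
    unfolding Rnr_integral_def f_def by (rule has_contour_integral_integral)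
  then have "((\<lambda>t. c2 * f (Suc (Suc m)) t - c1 * f (Suc m) t + c0 * f m t) has_contour_integral
      (c2 * Rnr_integral a w (Suc (Suc m)) - c1 * Rnr_integral a w (Suc m) + c0 * Rnr_integral a w m))
      (linepath 1 w)"
    by (intro has_contour_integral_add has_contour_integral_diff has_contour_integral_lmul)
  moreover have "((\<lambda>t. c2 * f (Suc (Suc m)) t - c1 * f (Suc m) t + c0 * f m t) has_contour_integral
      (g w - g 1)) (linepath 1 w)"
    unfolding f_def g_def c2_def c1_def c0_def
    by (rule has_contour_integral_linepath_primitive[OF w Rnr_integrand_recurrence_primitive])
  ultimately have "c2 * Rnr_integral a w (Suc (Suc m)) - c1 * Rnr_integral a w (Suc m) + c0 * Rnr_integral a w m
      = g w - g 1"
    by (rule has_contour_integral_unique)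
  also have "g w - g 1 = 0"
    by (simp add: g_def)
  finally show ?thesis
    unfolding c2_def c1_def c0_def by (simp add: algebra_simps)
qed

lemma Rnr_integral_0:
  assumes w: "w \<notin> \<real>\<^sub>\<le>\<^sub>0" and "a \<noteq> 0"
  shows "Rnr_integral a w 0 = (w powr a - 1) / a"
proof -
  have "((\<lambda>t. t powr a / a) has_field_derivative (1 - t) ^ 0 * (t - w) ^ 0 * t powr (- (of_nat 0 + 1 - a)))
      (at t)" if "t \<notin> \<real>\<^sub>\<le>\<^sub>0" for t
    by (rule DERIV_cong[OF DERIV_cdivide[OF has_field_derivative_powr[OF that]]]) (use \<open>a \<noteq> 0\<close> in simp)
  from has_contour_integral_linepath_primitive[OF w this] show ?thesis
    unfolding Rnr_integral_def by (simp add: contour_integral_unique diff_divide_distrib)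
qed

lemma Rnr_integral_1:
  fixes a w :: complex
  assumes w: "w \<notin> \<real>\<^sub>\<le>\<^sub>0" and a: "a \<noteq> 0" "a + 1 \<noteq> 0" "a - 1 \<noteq> 0"
  defines "Q \<equiv> \<lambda>t. (- (t^2)) / (a + 1) + (1 + w) * t / a - w / (a - 1)"
  shows "Rnr_integral a w 1 = w powr a / w * Q w - Q 1"
proof -
  have "((\<lambda>t. t powr (a - 1) * Q t) has_field_derivative
      (1 - t) ^ 1 * (t - w) ^ 1 * t powr (- (of_nat 1 + 1 - a))) (at t)"
    if t: "t \<notin> \<real>\<^sub>\<le>\<^sub>0" for t
  proof -
    have "t \<noteq> 0"
      using t by auto
    have "Q = (\<lambda>t. (- 1 / (a + 1)) * t^2 + ((1 + w) / a) * t - w / (a - 1))"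
      by (auto simp: Q_def fun_eq_iff)
    then have dQ: "(Q has_field_derivative (- (2 * t) / (a + 1) + (1 + w) / a)) (at t)"
      by (simp only:) (rule derivative_eq_intros refl | simp)+
    define T where "T = t powr (a - 2)"
    have p: "t powr (a - 1 - 1) = T" "t powr (a - 1) = T * t" "t powr (- (of_nat 1 + 1 - a)) = T"
      using powr_add[of t "a - 2" 1] \<open>t \<noteq> 0\<close> by (simp_all add: T_def)
    define i1 i2 i3 where "i1 = 1 / (a + 1)" and "i2 = 1 / a" and "i3 = 1 / (a - 1)"
    have "i1 * (a + 1) = 1" "i2 * a = 1" "i3 * (a - 1) = 1"
      using a by (simp_all add: i1_def i2_def i3_def)
    moreover have inv: "N / (a + 1) = N * i1" "N / a = N * i2" "N / (a - 1) = N * i3" for N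
      by (simp_all add: i1_def i2_def i3_def)
    ultimately show ?thesis
      by (rule_tac DERIV_cong[OF DERIV_mult[OF has_field_derivative_powr[OF t] dQ]])
         (unfold p Q_def inv, algebra)
  qed
  from has_contour_integral_linepath_primitive[OF w this] show ?thesis
    unfolding Rnr_integral_def by (simp add: contour_integral_unique powr_diff)
qed

lemma Rnr_eq_Rnr_integral:
  assumes "n \<ge> 1"
  shows "Rnr n k w = pochhammer (1 / of_nat n) (Suc k) / fact k * Rnr_integral (1 / of_nat n) w k"
proof -
  have "Re (1 / of_nat n :: complex) > 0"
    using assms by simp
  then have "1 / of_nat n \<notin> (\<int>\<^sub>\<le>\<^sub>0 :: complex set)"
    using nonpos_Ints_subset_nonpos_Reals by (auto simp: complex_nonpos_Reals_iff)
  from pochhammer_Gamma[OF this, of "Suc k"] show ?thesis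
    unfolding Rnr_def Rnr_integral_def by (simp add: add_ac)
qed

lemma contiguous_recurrence_Rnr:
  assumes "n \<ge> 1" "w \<notin> \<real>\<^sub>\<le>\<^sub>0"
  shows "contiguous_recurrence (1 / of_nat n) (w + 1) ((w - 1)^2) (\<lambda>r. Rnr n r w)"
  unfolding contiguous_recurrence_def
proof
  fix m
  define \<alpha> :: complex where "\<alpha> = 1 / of_nat n"
  define g where "g k = pochhammer \<alpha> (Suc k) / fact k" for k
  define J where "J k = Rnr_integral \<alpha> w k" for k
  have R: "Rnr n k w = g k * J k" for k
    unfolding g_def J_def \<alpha>_def by (rule Rnr_eq_Rnr_integral[OF assms(1)])
  have g_Suc: "g (Suc k) = (\<alpha> + of_nat k + 1) / (of_nat k + 1) * g k" for k
    unfolding g_def by (simp add: pochhammer_rec'[of _ "Suc k"] field_simps)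
  define i1 i2 where "i1 = 1 / (of_nat m + 1 :: complex)" and "i2 = 1 / (of_nat m + 2 :: complex)"
  have "i1 * (of_nat m + 1) = 1" "i2 * (of_nat m + 2) = 1"
    using of_nat_eq_0_iff[of "m + 1", where 'a=complex] of_nat_eq_0_iff[of "m + 2", where 'a=complex]
    by (simp_all add: i1_def i2_def add.commute)
  moreover have "g (Suc (Suc m)) = (\<alpha> + of_nat m + 2) * i2 * g (Suc m)"
    "g (Suc m) = (\<alpha> + of_nat m + 1) * i1 * g m"
    using g_Suc[of "Suc m"] g_Suc[of m] by (simp_all add: i1_def i2_def add_ac)
  moreover have "(of_nat m + 2 - \<alpha>) * (of_nat m + 2 + \<alpha>) * J (Suc (Suc m))
     = (2 * of_nat m + 3) * (of_nat m + 2) * (w + 1) * J (Suc m)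
       - (of_nat m + 1) * (of_nat m + 2) * (w - 1)^2 * J m"
    unfolding J_def by (rule Rnr_integral_recurrence[OF assms(2)])
  ultimately show "(of_nat m + 2 - 1 / of_nat n) * Rnr n (Suc (Suc m)) w
     = (2 * of_nat m + 3) * (w + 1) * Rnr n (Suc m) w - (of_nat m + 1 + 1 / of_nat n) * (w - 1)^2 * Rnr n m w"
    unfolding R \<alpha>_def[symmetric] by algebra
qed

lemma Xnr_star_0 [simp]: "Xnr_star n 0 x y = 1"
  by (simp add: Xnr_star_def Xnr_coeff_def)

lemma Xnr_star_1:
  "Xnr_star n 1 x y = y + (1 + 1 / of_nat n) / (1 - 1 / of_nat n) * x"
  by (simp add: Xnr_star_def Xnr_coeff_def)

lemma Rnr_0:
  assumes "n \<ge> 1" "w \<notin> \<real>\<^sub>\<le>\<^sub>0"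
  shows "Rnr n 0 w = w powr (1 / of_nat n) - 1"
  using Rnr_integral_0[OF assms(2), of "1 / of_nat n"] assms(1)
  by (simp add: Rnr_eq_Rnr_integral)

lemma Rnr_1:
  assumes "n \<ge> 2" "w \<notin> \<real>\<^sub>\<le>\<^sub>0"
  shows "Rnr n 1 w = w powr (1 / of_nat n) * Xnr_star n 1 1 w - Xnr_star n 1 w 1"
proof -
  define \<alpha> :: complex where "\<alpha> = 1 / of_nat n"
  have "Re \<alpha> > 0" "Re \<alpha> < 1"
    using assms(1) by (simp_all add: \<alpha>_def)
  then have \<alpha>: "\<alpha> \<noteq> 0" "\<alpha> + 1 \<noteq> 0" "\<alpha> - 1 \<noteq> 0" "1 - \<alpha> \<noteq> 0"
    by (auto simp: complex_eq_iff)
  have "w \<noteq> 0"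
    using assms(2) by auto
  define W where "W = w powr \<alpha>"
  define i1 i2 i3 i4 iw where "i1 = 1 / (\<alpha> + 1)" and "i2 = 1 / \<alpha>" and "i3 = 1 / (\<alpha> - 1)"
    and "i4 = 1 / (1 - \<alpha>)" and "iw = 1 / w"
  have "i1 * (\<alpha> + 1) = 1" "i2 * \<alpha> = 1" "i3 * (\<alpha> - 1) = 1" "i4 * (1 - \<alpha>) = 1" "iw * w = 1"
    using \<alpha> \<open>w \<noteq> 0\<close> by (simp_all add: i1_def i2_def i3_def i4_def iw_def)
  moreover have inv: "N / (\<alpha> + 1) = N * i1" "N / \<alpha> = N * i2" "N / (\<alpha> - 1) = N * i3"
    "N / (1 - \<alpha>) = N * i4" "N / w = N * iw" for N
    by (simp_all add: i1_def i2_def i3_def i4_def iw_def)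
  moreover have "Rnr n 1 w = \<alpha> * (\<alpha> + 1) * Rnr_integral \<alpha> w 1"
    using Rnr_eq_Rnr_integral[of n 1 w] assms(1) by (simp add: \<alpha>_def pochhammer_Suc algebra_simps)
  ultimately show ?thesis
    unfolding Rnr_integral_1[OF assms(2) \<alpha>(1-3)] Xnr_star_1 \<alpha>_def[symmetric] W_def[symmetric] inv power_one
    by algebra
qed

lemma Rnr_closed_form:
  assumes "n \<ge> 2" "w \<notin> \<real>\<^sub>\<le>\<^sub>0"
  shows "Rnr n r w = w powr (1 / of_nat n) * Xnr_star n r 1 w - Xnr_star n r w 1"
proof (rule contiguous_recurrence_unique[where f = "\<lambda>r. Rnr n r w"])
  have "w \<noteq> 0"
    using assms(2) by auto
  have "contiguous_recurrence (1 / of_nat n) (w + 1) ((w - 1)^2) (\<lambda>r. Xnr_star n r 1 w)"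
    using contiguous_recurrence_Xnr_star[of n w 1] assms(1) \<open>w \<noteq> 0\<close> by (simp add: add.commute power2_commute)
  moreover have "contiguous_recurrence (1 / of_nat n) (w + 1) ((w - 1)^2) (\<lambda>r. Xnr_star n r w 1)"
    using contiguous_recurrence_Xnr_star[of n 1 w] assms(1) by simp
  ultimately show "contiguous_recurrence (1 / of_nat n) (w + 1) ((w - 1)^2)
      (\<lambda>r. w powr (1 / of_nat n) * Xnr_star n r 1 w - Xnr_star n r w 1)"
    using contiguous_recurrence_diff[of _ _ _ _ _ _ 1] by simp
  show "contiguous_recurrence (1 / of_nat n) (w + 1) ((w - 1)^2) (\<lambda>r. Rnr n r w)"
    using contiguous_recurrence_Rnr assms by simp
  show "1 / of_nat n \<noteq> (of_nat m + 2 :: complex)" for m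
    by (rule inverse_of_nat_neq_of_nat_add_2)
  show "Rnr n 0 w = w powr (1 / of_nat n) * Xnr_star n 0 1 w - Xnr_star n 0 w 1"
    using Rnr_0 assms by simp
  show "Rnr n 1 w = w powr (1 / of_nat n) * Xnr_star n 1 1 w - Xnr_star n 1 w 1"
    using Rnr_1 assms by simp
qed

section \<open>The sequences A_r and B_r\<close>

lemma poly_degree_2:
  fixes U :: "'a::comm_ring_1 poly"
  assumes "degree U = 2"
  shows "U = [:coeff U 0, coeff U 1, coeff U 2:]"
proof (rule poly_eqI)
  fix i
  show "coeff U i = coeff [:coeff U 0, coeff U 1, coeff U 2:] i"
  proof (cases "i \<le> 2")
    case True
    then have "i = 0 \<or> i = 1 \<or> i = 2"
      by auto
    then show ?thesis
      by (auto simp: numeral_2_eq_2)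
  next
    case False
    then have "i = Suc (Suc (Suc (i - 3)))"
      by simp
    then show ?thesis
      using False assms by (metis coeff_eq_0 coeff_pCons_Suc coeff_0 not_le)
  qed
qed

lemma poly_h_poly:
  assumes "degree U = 2"
  shows "poly (h_poly n U) y = (of_nat n ^ 2 - 1) / 4 * quad_disc U"
proof -
  define c0 c1 c2 where "c0 = coeff U 0" and "c1 = coeff U 1" and "c2 = coeff U 2"
  have U: "U = [:c0, c1, c2:]"
    unfolding c0_def c1_def c2_def by (rule poly_degree_2[OF assms])
  have ev: "poly U y = c0 + c1 * y + c2 * y^2" "poly (pderiv U) y = c1 + 2 * c2 * y"
    "poly (pderiv (pderiv U)) y = 2 * c2"
    by (subst U; simp add: pderiv_pCons algebra_simps power2_eq_square)+
  have disc: "quad_disc U = c1^2 - 4 * c2 * c0"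
    by (simp add: quad_disc_def c0_def c1_def c2_def)
  show ?thesis
    unfolding h_poly_def poly_smult poly_diff poly_mult poly_power ev disc by algebra
qed

lemma lam_eq_quad_disc:
  assumes "degree U = 2" "n \<ge> 2"
  shows "lam n U = quad_disc U / 4"
proof -
  have "n ^ 2 \<noteq> 1"
    using assms(2) by (simp add: power2_eq_square)
  then have "of_nat n ^ 2 - 1 \<noteq> (0 :: complex)"
    by (metis eq_iff_diff_eq_0 of_nat_1 of_nat_eq_iff of_nat_power)
  have cancel: "x / 4 * D / x = D / 4" if "x \<noteq> 0" for x D :: complex
    using that by simp
  show ?thesis
    unfolding lam_def poly_0_coeff_0[symmetric] poly_h_poly[OF assms(1)]
    by (rule cancel) fact
qed

lemma A_numerator_eq:
  assumes "s \<noteq> 0" and h: "\<And>y. poly (h_poly n U) y = (of_nat n ^ 2 - 1) * s^2"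
  shows "smult ((of_nat n - 1) * s / 2) (A1_poly n U P) - smult (1 / (4 * s)) (Y1_poly n U P * A0_poly n U)
       = P * smult ((of_nat n ^ 2 - 1) * s / 6) (pderiv U)"
proof (rule poly_ext)
  fix y
  define i where "i = 1 / s"
  have i: "i * s = 1"
    using assms(1) by (simp add: i_def)
  have div: "1 / (4 * s) = i / 4"
    by (simp add: i_def)
  show "poly (smult ((of_nat n - 1) * s / 2) (A1_poly n U P)
      - smult (1 / (4 * s)) (Y1_poly n U P * A0_poly n U)) y
    = poly (P * smult ((of_nat n ^ 2 - 1) * s / 6) (pderiv U)) y"
    unfolding A1_poly_def Y1_poly_def A0_poly_def div by (simp add: h) (use i in algebra)
qed

lemma B_numerator_eq:
  assumes "s \<noteq> 0" and h: "\<And>y. poly (h_poly n U) y = (of_nat n ^ 2 - 1) * s^2"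
  shows "smult ((of_nat n - 1) * s / 2) (B1_poly n U P) - smult (1 / (4 * s)) (Y1_poly n U P * B0_poly n U)
       = P * (smult ((of_nat n ^ 2 - 1) * s / 6) ([:0, 1:] * pderiv U) - smult ((of_nat n ^ 2 - 1) * s / 3) U)"
proof (rule poly_ext)
  fix y
  define i where "i = 1 / s"
  have i: "i * s = 1"
    using assms(1) by (simp add: i_def)
  have div: "1 / (4 * s) = i / 4"
    by (simp add: i_def)
  show "poly (smult ((of_nat n - 1) * s / 2) (B1_poly n U P)
      - smult (1 / (4 * s)) (Y1_poly n U P * B0_poly n U)) y
    = poly (P * (smult ((of_nat n ^ 2 - 1) * s / 6) ([:0, 1:] * pderiv U)
      - smult ((of_nat n ^ 2 - 1) * s / 3) U)) y"
    unfolding B1_poly_def A1_poly_def Y1_poly_def B0_poly_def div by (simp add: h field_simps) (use i in algebra)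
qed

lemma contiguous_recurrence_rec_seq:
  assumes "n \<ge> 1" "s \<noteq> 0"
  shows "contiguous_recurrence (1 / of_nat n) (poly Y x / (2 * of_nat n * s)) (poly P x ^ 2)
     (\<lambda>r. s ^ r * poly (rec_seq (s^2) n Y P F0 F1 r) x)"
  unfolding contiguous_recurrence_def
proof
  fix m
  define F where "F r = poly (rec_seq (s^2) n Y P F0 F1 r) x" for r
  define nn :: complex where "nn = of_nat n"
  define iN iS iQ where "iN = 1 / nn" and "iS = 1 / s"
    and "iQ = 1 / (s^2 * (nn * (of_nat m + 2) - 1))"
  have "nn \<noteq> 0"
    using assms(1) by (simp add: nn_def)
  have "nn * (of_nat m + 2) - 1 \<noteq> 0"
  proof
    assume "nn * (of_nat m + 2) - 1 = 0"
    moreover have "of_nat (n * (m + 2)) = nn * (of_nat m + 2)"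
      by (simp add: nn_def algebra_simps)
    ultimately have "of_nat (n * (m + 2)) = (of_nat 1 :: complex)"
      by simp
    then have "n * (m + 2) = 1"
      using of_nat_eq_iff by blast
    then show False
      by (cases n) auto
  qed
  then have inv: "iN * nn = 1" "iS * s = 1" "iQ * (s^2 * (nn * (of_nat m + 2) - 1)) = 1"
    using \<open>nn \<noteq> 0\<close> assms(2) by (simp_all add: iN_def iS_def iQ_def)
  have "F (Suc (Suc m)) = iQ * ((of_nat m + 1 + 1/2) * (poly Y x * F (Suc m))
      - (nn * (of_nat m + 1) + 1) * (poly P x ^ 2 * F m))"
    by (simp add: F_def iQ_def nn_def algebra_simps)
  then have "(of_nat m + 2 - iN) * (s * (s * B) * F (Suc (Suc m)))
     = (2 * of_nat m + 3) * (poly Y x * (iN * iS / 2)) * (s * B * F (Suc m))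
       - (of_nat m + 1 + iN) * poly P x ^ 2 * (B * F m)" for B
    using inv by algebra
  then show "(of_nat m + 2 - 1 / of_nat n) * (s ^ Suc (Suc m) * F (Suc (Suc m)))
     = (2 * of_nat m + 3) * (poly Y x / (2 * of_nat n * s)) * (s ^ Suc m * F (Suc m))
       - (of_nat m + 1 + 1 / of_nat n) * poly P x ^ 2 * (s ^ m * F m)"
    unfolding power_Suc by (simp add: iN_def iS_def nn_def)
qed

lemma coef_poly_Xnr_star_1:
  fixes n :: nat and s x :: complex and Y P F0 F1 :: "complex poly"
  assumes n: "n \<ge> 2" and "s \<noteq> 0"
    and dvd: "P dvd smult ((of_nat n - 1) * s / 2) F1 - smult (1 / (4 * s)) (Y * F0)"
  defines "z \<equiv> (poly Y x / (2 * of_nat n * s) + poly P x) / 2"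
    and "u \<equiv> (poly Y x / (2 * of_nat n * s) - poly P x) / 2"
  shows "s * poly F1 x = poly (coef_poly n s P Y F1 F0 (1/2)) x * Xnr_star n 1 z u
      - poly (coef_poly n s P Y F1 F0 (-1/2)) x * Xnr_star n 1 u z"
proof -
  define N where "N = smult ((of_nat n - 1) * s / 2) F1 - smult (1 / (4 * s)) (Y * F0)"
  define Q where "Q = poly (N div P) x"
  have coef: "poly (coef_poly n s P Y F1 F0 e) x = Q + e * poly F0 x" for e
    by (simp add: coef_poly_def Q_def N_def)
  have "Q * poly P x = poly N x"
    unfolding Q_def using dvd_div_mult_self[OF dvd[folded N_def]] by (metis poly_mult)
  then have QP: "Q * poly P x = (of_nat n - 1) * s / 2 * poly F1 x - poly Y x * poly F0 x / (4 * s)"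
    by (simp add: N_def)
  define nn :: complex where "nn = of_nat n"
  define iN iS ik where "iN = 1 / nn" and "iS = 1 / s" and "ik = 1 / (1 - iN)"
  have "nn \<noteq> 0" "1 - iN \<noteq> 0"
    using n by (simp_all add: nn_def iN_def)
  then have inv: "iN * nn = 1" "iS * s = 1" "ik * (1 - iN) = 1"
    using \<open>s \<noteq> 0\<close> by (simp_all add: iN_def iS_def ik_def)
  have zu: "z = (poly Y x * (iS * iN / 2) + poly P x) / 2" "u = (poly Y x * (iS * iN / 2) - poly P x) / 2"
    by (simp_all add: z_def u_def iS_def iN_def nn_def)
  have QP': "Q * poly P x = (nn - 1) * s / 2 * poly F1 x - poly Y x * poly F0 x * iS / 4"
    using QP by (simp add: nn_def iS_def)
  have "s * poly F1 x = (Q + 1/2 * poly F0 x) * (u + (1 + iN) * ik * z)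
      - (Q + -1/2 * poly F0 x) * (z + (1 + iN) * ik * u)"
    unfolding zu using inv QP' by (simp add: field_simps) algebra
  then show ?thesis
    unfolding coef Xnr_star_1 by (simp add: iN_def ik_def nn_def)
qed

lemma rec_seq_closed_form:
  fixes n :: nat and s x :: complex and Y P F0 F1 :: "complex poly"
  assumes n: "n \<ge> 2" and "s \<noteq> 0"
    and dvd: "P dvd smult ((of_nat n - 1) * s / 2) F1 - smult (1 / (4 * s)) (Y * F0)"
  defines "z \<equiv> (poly Y x / (2 * of_nat n * s) + poly P x) / 2"
    and "u \<equiv> (poly Y x / (2 * of_nat n * s) - poly P x) / 2"
  assumes "z \<noteq> 0" "u \<noteq> 0"
  shows "s ^ r * poly (rec_seq (s^2) n Y P F0 F1 r) x
       = poly (coef_poly n s P Y F1 F0 (1/2)) x * Xnr_star n r z u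
         - poly (coef_poly n s P Y F1 F0 (-1/2)) x * Xnr_star n r u z"
proof (rule contiguous_recurrence_unique[where a = "1 / of_nat n" and p = "z + u" and q = "(z - u)^2"])
  have "z + u = poly Y x / (2 * of_nat n * s)" "(z - u)^2 = poly P x ^ 2"
    by (simp_all add: z_def u_def field_simps)
  then show "contiguous_recurrence (1 / of_nat n) (z + u) ((z - u)^2)
      (\<lambda>r. s ^ r * poly (rec_seq (s^2) n Y P F0 F1 r) x)"
    using contiguous_recurrence_rec_seq[of n s] n \<open>s \<noteq> 0\<close> by simp
  have "contiguous_recurrence (1 / of_nat n) (z + u) ((z - u)^2) (\<lambda>r. Xnr_star n r z u)"
    using contiguous_recurrence_Xnr_star[of n u z] n \<open>u \<noteq> 0\<close> by simp
  moreover have "contiguous_recurrence (1 / of_nat n) (z + u) ((z - u)^2) (\<lambda>r. Xnr_star n r u z)"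
    using contiguous_recurrence_Xnr_star[of n z u] n \<open>z \<noteq> 0\<close> by (simp add: add.commute power2_commute)
  ultimately show "contiguous_recurrence (1 / of_nat n) (z + u) ((z - u)^2)
      (\<lambda>r. poly (coef_poly n s P Y F1 F0 (1/2)) x * Xnr_star n r z u
         - poly (coef_poly n s P Y F1 F0 (-1/2)) x * Xnr_star n r u z)"
    by (rule contiguous_recurrence_diff)
  show "1 / of_nat n \<noteq> (of_nat m + 2 :: complex)" for m
    by (rule inverse_of_nat_neq_of_nat_add_2)
  show "s ^ 0 * poly (rec_seq (s^2) n Y P F0 F1 0) x
      = poly (coef_poly n s P Y F1 F0 (1/2)) x * Xnr_star n 0 z u
        - poly (coef_poly n s P Y F1 F0 (-1/2)) x * Xnr_star n 0 u z"
    by (simp add: coef_poly_def algebra_simps)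
  show "s ^ 1 * poly (rec_seq (s^2) n Y P F0 F1 1) x
      = poly (coef_poly n s P Y F1 F0 (1/2)) x * Xnr_star n 1 z u
        - poly (coef_poly n s P Y F1 F0 (-1/2)) x * Xnr_star n 1 u z"
    using coef_poly_Xnr_star_1[OF n \<open>s \<noteq> 0\<close> dvd] by (simp add: z_def u_def)
qed

lemma A_B_seq_closed_form:
  fixes n :: nat and s x :: complex
  assumes n: "n \<ge> 2" and degU: "degree U = 2" and "quad_disc U \<noteq> 0" and s: "s ^ 2 = lam n U"
    and "z_val n U P s x \<noteq> 0" "u_val n U P s x \<noteq> 0"
  shows "s ^ r * poly (A_seq n U P r) x
      = poly (coef_poly n s P (Y1_poly n U P) (A1_poly n U P) (A0_poly n U) (1/2)) x
          * Xnr_star n r (z_val n U P s x) (u_val n U P s x)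
        - poly (coef_poly n s P (Y1_poly n U P) (A1_poly n U P) (A0_poly n U) (-1/2)) x
          * Xnr_star n r (u_val n U P s x) (z_val n U P s x)" (is ?A)
    and "s ^ r * poly (B_seq n U P r) x
      = poly (coef_poly n s P (Y1_poly n U P) (B1_poly n U P) (B0_poly n U) (1/2)) x
          * Xnr_star n r (z_val n U P s x) (u_val n U P s x)
        - poly (coef_poly n s P (Y1_poly n U P) (B1_poly n U P) (B0_poly n U) (-1/2)) x
          * Xnr_star n r (u_val n U P s x) (z_val n U P s x)" (is ?B)
proof -
  have lam: "lam n U = quad_disc U / 4"
    by (rule lam_eq_quad_disc[OF degU n])
  then have "s \<noteq> 0"
    using s assms(3) by auto
  have h: "poly (h_poly n U) y = (of_nat n ^ 2 - 1) * s^2" for y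
    unfolding poly_h_poly[OF degU] s lam by simp
  note closed_form = rec_seq_closed_form[OF n \<open>s \<noteq> 0\<close> _ assms(5,6)[unfolded z_val_def u_val_def]]
  show ?A
    unfolding A_seq_def s[symmetric] z_val_def u_val_def
    by (rule closed_form) (unfold A_numerator_eq[OF \<open>s \<noteq> 0\<close> h], rule dvd_triv_left)
  show ?B
    unfolding B_seq_def s[symmetric] z_val_def u_val_def
    by (rule closed_form) (unfold B_numerator_eq[OF \<open>s \<noteq> 0\<close> h], rule dvd_triv_left)
qed

theorem lemma2p3:
  fixes n r :: nat and P U :: "complex poly" and \<beta> s x :: complex
  assumes "n \<ge> 2" and "r \<ge> 1"
    and "degree P = n" and "degree U = 2" and "quad_disc U \<noteq> 0"
    and "U * pderiv (pderiv P) - smult (of_nat n - 1) (pderiv U * pderiv P)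
         + smult (of_nat n * (of_nat n - 1) / 2) (pderiv (pderiv U) * P) = 0"
    and "poly P \<beta> = 0"
    and "s ^ 2 = lam n U"
    and "x \<noteq> 0"
  defines "z \<equiv> z_val n U P s x"
    and "u \<equiv> u_val n U P s x"
    and "w \<equiv> z_val n U P s x / u_val n U P s x"
    and "a \<equiv> poly (coef_poly n s P (Y1_poly n U P) (A1_poly n U P) (A0_poly n U) (1/2)) x"
    and "b \<equiv> poly (coef_poly n s P (Y1_poly n U P) (A1_poly n U P) (A0_poly n U) (-1/2)) x"
    and "c \<equiv> poly (coef_poly n s P (Y1_poly n U P) (B1_poly n U P) (B0_poly n U) (1/2)) x"
    and "d \<equiv> poly (coef_poly n s P (Y1_poly n U P) (B1_poly n U P) (B0_poly n U) (-1/2)) x"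
  assumes "w \<notin> \<real>\<^sub>\<le>\<^sub>0"
  shows "s ^ r * (\<beta> * poly (A_seq n U P r) x - poly (B_seq n U P r) x)
         = (\<beta> * (a * w powr (1 / of_nat n) - b) - (c * w powr (1 / of_nat n) - d)) * Xnr_star n r u z
           - (\<beta> * a - c) * u ^ r * Rnr n r w"
proof -
  have "w \<noteq> 0"
    using assms(17) by auto
  then have "u \<noteq> 0" "z \<noteq> 0" "z = w * u"
    unfolding w_def u_def z_def by auto
  note A_B = A_B_seq_closed_form[OF assms(1,4,5,8), where P = P and x = x and r = r, folded z_def u_def a_def b_def c_def d_def]
  have X: "Xnr_star n r z u = u ^ r * Xnr_star n r w 1" "Xnr_star n r u z = u ^ r * Xnr_star n r 1 w"
    using Xnr_star_mult[of n r u w 1] Xnr_star_mult[of n r u 1 w] \<open>z = w * u\<close> by (simp_all add: mult.commute)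
  have "s ^ r * (\<beta> * poly (A_seq n U P r) x - poly (B_seq n U P r) x)
      = \<beta> * (s ^ r * poly (A_seq n U P r) x) - s ^ r * poly (B_seq n U P r) x"
    by (simp add: algebra_simps)
  also have "\<dots> = \<beta> * (a * Xnr_star n r z u - b * Xnr_star n r u z) - (c * Xnr_star n r z u - d * Xnr_star n r u z)"
    unfolding A_B[OF \<open>z \<noteq> 0\<close> \<open>u \<noteq> 0\<close>] ..
  also have "\<dots> = (\<beta> * (a * w powr (1 / of_nat n) - b) - (c * w powr (1 / of_nat n) - d)) * Xnr_star n r u z
      - (\<beta> * a - c) * u ^ r * Rnr n r w"
    unfolding Rnr_closed_form[OF assms(1,17)] X by (simp add: algebra_simps)
  finally show ?thesis .
qed

end
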